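(* Let $G$ be a locally compact abelian group, let $\mu\in M(\widehat{G})$ be a probability measure, and let $f=\widehat{\mu}:G\to\mathbb{C}$ be its characteristic function. Let $U$ be a Borel subset of $\widehat{G}$ with $U\cap(-U)=\emptyset$, where $-U=\{\gamma\in\widehat{G}:-\gamma\in U\}$. If $\mu(U)=1$, then $f$ is completely determined by $\operatorname{Im} f$, i.e. every characteristic function $g$ on $G$ with $\operatorname{Im} g\equiv \operatorname{Im} f$ satisfies $g\equiv f$.
   Context: $\widehat{G}$ denotes the dual group of $G$ (continuous homomorphisms $\gamma:G\to\{z\in\mathbb{C}:|z|=1\}$), written additively, with $(x,\gamma)=\gamma(x)$. $M(\widehat{G})$ is the Banach algebra of bounded regular complex Borel measures on $\widehat{G}$. For $\omega\in M(\widehat{G})$, $\widehat{\omega}(x)=\int_{\widehat{G}}\overline{(x,\gamma)}\,d\omega(\gamma)$, $x\in G$. A characteristic function on $G$ is a function of the form $\widehat{\mu}$ with $\mu$ a nonnegative measure in $M(\widehat{G})$ with $\mu(\widehat{G})=1$. *)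

theory Defs
  imports "HOL-Probability.Probability"
begin

definition lca_group :: "'a::{topological_ab_group_add,t2_space} itself \<Rightarrow> bool" where
  "lca_group _ \<longleftrightarrow> locally_compact_space (euclidean :: 'a topology)"

definition dual_group :: "('a::{topological_ab_group_add,t2_space} \<Rightarrow> complex) set" where
  "dual_group = {\<gamma>. continuous_on UNIV \<gamma> \<and> (\<forall>x. norm (\<gamma> x) = 1)
                     \<and> (\<forall>x y. \<gamma> (x + y) = \<gamma> x * \<gamma> y)}"

definition dual_neg :: "('a \<Rightarrow> complex) \<Rightarrow> ('a \<Rightarrow> complex)" where
  "dual_neg \<gamma> = (\<lambda>x. cnj (\<gamma> x))"

definition dual_topology :: "('a::{topological_ab_group_add,t2_space} \<Rightarrow> complex) topology" where
  "dual_topology = topology_generated_by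
     {{\<gamma> \<in> dual_group. \<gamma> ` K \<subseteq> V} | K V. compact K \<and> open V}"

definition dual_borel :: "('a::{topological_ab_group_add,t2_space} \<Rightarrow> complex) measure" where
  "dual_borel = sigma (topspace dual_topology) {S. openin dual_topology S}"

definition dual_prob_measure ::
    "('a::{topological_ab_group_add,t2_space} \<Rightarrow> complex) measure \<Rightarrow> bool" where
  "dual_prob_measure \<mu> \<longleftrightarrow>
     prob_space \<mu> \<and> space \<mu> = space dual_borel \<and> sets \<mu> = sets dual_borel \<and>
     (\<forall>E \<in> sets \<mu>.
        emeasure \<mu> E = (SUP K \<in> {K. compactin dual_topology K \<and> K \<subseteq> E}. emeasure \<mu> K) \<and>
        emeasure \<mu> E = (INF V \<in> {V. openin dual_topology V \<and> E \<subseteq> V}. emeasure \<mu> V))"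

definition fourier_stieltjes ::
    "('a \<Rightarrow> complex) measure \<Rightarrow> 'a \<Rightarrow> complex" where
  "fourier_stieltjes \<mu> x = (\<integral>\<gamma>. cnj (\<gamma> x) \<partial>\<mu>)"

definition characteristic_function ::
    "('a::{topological_ab_group_add,t2_space} \<Rightarrow> complex) \<Rightarrow> bool" where
  "characteristic_function g \<longleftrightarrow> (\<exists>\<nu>. dual_prob_measure \<nu> \<and> g = fourier_stieltjes \<nu>)"

end

theory Submission
  imports Defs
begin

(* Since cnj (gamma x) = gamma (-x), the imaginary part Im f x = (f x - cnj (f x)) / (2 i) is the
   integral of the character gamma |-> cnj (gamma x) against the odd part mu - mu o neg of mu.  So if
   Im g = Im f for g = nu^, the odd parts of mu and nu have the same integrals against all
   trigonometric polynomials.  By Stone-Weierstrass on the compact space of all homomorphisms into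
   the unit circle (with the pointwise topology), together with Urysohn functions and the regularity
   of the measures, this gives mu K - mu (-K) = nu K - nu (-K) for every compact K.  If mu is
   concentrated on U and U, -U are disjoint, then mu (-K) = 0 for compact K inside U, so
   mu <= nu on subsets of U, hence everywhere; and a probability measure dominated by another one
   coincides with it. *)

section \<open>Stone-Weierstrass and Urysohn on function spaces\<close>

(* The function type carries the product topology, but it cannot be made an instance of t2_space
   (the arity would clash with the metric-space instance for countable index types).  The library's
   Stone-Weierstrass theorem is stated for t2_space types, so it is transported along this copy. *)
typedef ('a, 'b) pointwise = "UNIV :: ('a \<Rightarrow> 'b) set"
  morphisms apply_pointwise Abs_pointwise ..

instantiation pointwise :: (type, topological_space) topological_space
begin
definition open_pointwise_def: "open S \<longleftrightarrow> open (apply_pointwise ` S)"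
instance
proof
  fix S T :: "('a, 'b) pointwise set" and K :: "('a, 'b) pointwise set set"
  show "open (UNIV :: ('a, 'b) pointwise set)"
    by (simp add: open_pointwise_def type_definition.Rep_range[OF type_definition_pointwise])
  show "open S \<Longrightarrow> open T \<Longrightarrow> open (S \<inter> T)"
    by (simp add: open_pointwise_def image_Int apply_pointwise_inject inj_on_def open_Int)
  show "\<forall>S\<in>K. open S \<Longrightarrow> open (\<Union>K)"
    by (auto simp: open_pointwise_def image_Union)
qed
end

lemma open_vimage_apply_pointwise: "open B \<Longrightarrow> open (apply_pointwise -` B)"
  by (simp add: open_pointwise_def type_definition.Rep_range[OF type_definition_pointwise])

lemma continuous_on_apply_pointwise: "continuous_on UNIV apply_pointwise"
  by (simp add: continuous_on_open_vimage open_vimage_apply_pointwise)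

lemma continuous_on_Abs_pointwise: "continuous_on UNIV Abs_pointwise"
proof -
  have "Abs_pointwise -` S = apply_pointwise ` S" for S :: "('a, 'b) pointwise set"
    by (force simp: Abs_pointwise_inverse apply_pointwise_inverse image_iff)
  then show ?thesis
    unfolding continuous_on_open_vimage[OF open_UNIV] open_pointwise_def by simp
qed

lemma Hausdorff_space_euclidean_fun: "Hausdorff_space (euclidean :: ('a \<Rightarrow> 'b::t2_space) topology)"
proof -
  have "Hausdorff_space (euclidean :: 'b topology)"
    unfolding Hausdorff_space_def disjnt_def using hausdorff by auto
  then have "Hausdorff_space (product_topology (\<lambda>_. euclidean :: 'b topology) (UNIV :: 'a set))"
    by (simp add: Hausdorff_space_product_topology)
  then show ?thesis
    by (simp only: euclidean_product_topology)
qed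

instance pointwise :: (type, t2_space) t2_space
proof
  fix f g :: "('a, 'b::t2_space) pointwise" assume "f \<noteq> g"
  then have "apply_pointwise f \<noteq> apply_pointwise g"
    by (simp add: apply_pointwise_inject)
  then obtain U V where "openin euclidean U" "openin euclidean V"
    "apply_pointwise f \<in> U" "apply_pointwise g \<in> V" "disjnt U V"
    using Hausdorff_space_euclidean_fun unfolding Hausdorff_space_def topspace_euclidean by blast
  then show "\<exists>U V. open U \<and> open V \<and> f \<in> U \<and> g \<in> V \<and> U \<inter> V = {}"
    by (intro exI[of _ "apply_pointwise -` U"] exI[of _ "apply_pointwise -` V"])
      (auto simp: open_vimage_apply_pointwise disjnt_def)
qed

lemma compact_imp_closed_fun: "compact (S :: ('a \<Rightarrow> 'b::t2_space) set) \<Longrightarrow> closed S"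
  using compactin_imp_closedin[OF Hausdorff_space_euclidean_fun, of S]
  by (simp only: compactin_euclidean_iff closed_closedin)

lemma Stone_Weierstrass_fun:
  fixes R :: "(('a \<Rightarrow> 'b::t2_space) \<Rightarrow> real) set"
  assumes "compact S"
    and "\<And>f. f \<in> R \<Longrightarrow> continuous_on S f"
    and "\<And>f g. f \<in> R \<Longrightarrow> g \<in> R \<Longrightarrow> (\<lambda>x. f x + g x) \<in> R"
    and "\<And>f g. f \<in> R \<Longrightarrow> g \<in> R \<Longrightarrow> (\<lambda>x. f x * g x) \<in> R"
    and "\<And>c. (\<lambda>_. c) \<in> R"
    and "\<And>x y. x \<in> S \<Longrightarrow> y \<in> S \<Longrightarrow> x \<noteq> y \<Longrightarrow> \<exists>f\<in>R. f x \<noteq> f y"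
    and "continuous_on S h" "0 < e"
  shows "\<exists>g\<in>R. \<forall>x\<in>S. \<bar>h x - g x\<bar> < e"
proof -
  let ?R = "(\<lambda>f. f \<circ> apply_pointwise) ` R" and ?S = "Abs_pointwise ` S"
  have apply_S: "apply_pointwise ` ?S = S"
    by (force simp: Abs_pointwise_inverse image_image)
  have continuous_lift: "continuous_on ?S (f \<circ> apply_pointwise)"
    if "continuous_on S f" for f :: "('a \<Rightarrow> 'b) \<Rightarrow> real"
    using continuous_on_subset[OF continuous_on_apply_pointwise] that
    by (intro continuous_on_compose) (simp_all add: apply_S)
  interpret function_ring_on ?R ?S
  proof
    show "compact ?S"
      using assms(1) continuous_on_subset[OF continuous_on_Abs_pointwise]
      by (intro compact_continuous_image) auto
    show "f \<in> ?R \<Longrightarrow> continuous_on ?S f" for f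
      using assms(2) continuous_lift by blast
    show "f \<in> ?R \<Longrightarrow> g \<in> ?R \<Longrightarrow> (\<lambda>x. f x + g x) \<in> ?R" for f g
      using assms(3) by (auto simp: image_iff comp_def)
    show "f \<in> ?R \<Longrightarrow> g \<in> ?R \<Longrightarrow> (\<lambda>x. f x * g x) \<in> ?R" for f g
      using assms(4) by (auto simp: image_iff comp_def)
    show "(\<lambda>_. c) \<in> ?R" for c
      using assms(5) by (force simp: image_iff comp_def)
    show "\<exists>f\<in>?R. f x \<noteq> f y" if "x \<in> ?S" "y \<in> ?S" "x \<noteq> y" for x y
      using assms(6)[of "apply_pointwise x" "apply_pointwise y"] that apply_S
      by (auto simp: apply_pointwise_inject)
  qed
  obtain g where "g \<in> R" "\<forall>x\<in>?S. \<bar>(h \<circ> apply_pointwise) x - (g \<circ> apply_pointwise) x\<bar> < e"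
    using Stone_Weierstrass_basic[OF continuous_lift[OF assms(7)] assms(8)] by blast
  then show ?thesis
    by (auto simp: Abs_pointwise_inverse)
qed

lemma Urysohn_compact_fun:
  fixes S K C :: "('a \<Rightarrow> 'b::t2_space) set"
  assumes "compact S" "compact K" "compact C" "K \<subseteq> S" "C \<subseteq> S" "K \<inter> C = {}"
  obtains h :: "('a \<Rightarrow> 'b) \<Rightarrow> real"
  where "continuous_on S h" "\<And>x. x \<in> S \<Longrightarrow> 0 \<le> h x \<and> h x \<le> 1"
    "\<And>x. x \<in> K \<Longrightarrow> h x = 1" "\<And>x. x \<in> C \<Longrightarrow> h x = 0"
proof -
  let ?X = "top_of_set S"
  have "compact_space ?X" "Hausdorff_space ?X"
    using assms(1) Hausdorff_space_subtopology[OF Hausdorff_space_euclidean_fun]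
    by (auto simp: compact_space_subtopology)
  then have "normal_space ?X"
    using compact_Hausdorff_or_regular_imp_normal_space by blast
  have closedin: "closedin ?X T" if "compact T" "T \<subseteq> S" for T
    using that by (simp add: closed_subset compact_imp_closed_fun)
  have "disjnt C K"
    using assms(6) by (auto simp: disjnt_def)
  then obtain f where f: "continuous_map ?X (top_of_set {0..1::real}) f" "f ` C \<subseteq> {0}" "f ` K \<subseteq> {1}"
    using Urysohn_lemma[OF \<open>normal_space ?X\<close> closedin[OF assms(3,5)] closedin[OF assms(2,4)]]
    by (metis zero_le_one)
  have "continuous_map ?X euclidean f"
    using f(1) continuous_map_in_subtopology by blast
  show ?thesis
  proof (rule that)
    show "continuous_on S f"
      using \<open>continuous_map ?X euclidean f\<close> by (simp only: continuous_map_iff_continuous)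
    show "0 \<le> f x \<and> f x \<le> 1" if "x \<in> S" for x
    proof -
      have "f x \<in> topspace (top_of_set {0..1::real})"
        using continuous_map_image_subset_topspace[OF f(1)] that by force
      then show ?thesis by simp
    qed
    show "f x = 1" if "x \<in> K" for x
      using f(3) that by blast
    show "f x = 0" if "x \<in> C" for x
      using f(2) that by blast
  qed
qed

section \<open>Circle-valued homomorphisms and trigonometric polynomials\<close>

definition circle_homs :: "('a::group_add \<Rightarrow> complex) set" where
  "circle_homs = {\<gamma>. (\<forall>x. norm (\<gamma> x) = 1) \<and> (\<forall>x y. \<gamma> (x + y) = \<gamma> x * \<gamma> y)}"

lemma
  assumes "\<gamma> \<in> circle_homs"
  shows circle_homs_add: "\<gamma> (x + y) = \<gamma> x * \<gamma> y"
    and circle_homs_zero: "\<gamma> 0 = 1"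
    and circle_homs_minus: "\<gamma> (- x) = cnj (\<gamma> x)"
proof -
  have norm: "norm (\<gamma> x) = 1" for x
    using assms by (simp add: circle_homs_def)
  show add: "\<gamma> (x + y) = \<gamma> x * \<gamma> y" for x y
    using assms by (simp add: circle_homs_def)
  have nonzero: "\<gamma> x \<noteq> 0" for x
    using norm[of x] by auto
  have "\<gamma> 0 * \<gamma> 0 = \<gamma> 0 * 1"
    using add[of 0 0] by simp
  then show zero: "\<gamma> 0 = 1"
    using nonzero mult_left_cancel by blast
  have "\<gamma> x * \<gamma> (- x) = \<gamma> x * cnj (\<gamma> x)"
    using add[of x "- x"] zero norm[of x] by (simp add: complex_norm_square[symmetric])
  then show "\<gamma> (- x) = cnj (\<gamma> x)"
    using nonzero mult_left_cancel by blast
qed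

lemma compact_circle_homs: "compact circle_homs"
proof -
  have "compactin (product_topology (\<lambda>_. euclidean) UNIV) (PiE UNIV (\<lambda>_::'a. sphere (0::complex) 1))"
    by (simp add: compactin_PiE)
  then have compact: "compact (PiE UNIV (\<lambda>_::'a. sphere (0::complex) 1))"
    by (simp add: euclidean_product_topology)
  have closed: "closed {\<gamma>::'a \<Rightarrow> complex. \<forall>x y. \<gamma> (x + y) = \<gamma> x * \<gamma> y}"
    by (intro closed_Collect_all closed_Collect_eq continuous_on_mult continuous_on_product_coordinates)
  have eq: "(circle_homs :: ('a \<Rightarrow> complex) set) =
      PiE UNIV (\<lambda>_. sphere 0 1) \<inter> {\<gamma>. \<forall>x y. \<gamma> (x + y) = \<gamma> x * \<gamma> y}"
    unfolding circle_homs_def PiE_iff by auto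
  show ?thesis
    unfolding eq using compact closed by (rule compact_Int_closed)
qed

lemma continuous_on_dual_neg: "continuous_on UNIV dual_neg"
  unfolding dual_neg_def
  by (rule continuous_on_coordinatewise_then_product) (intro continuous_on_cnj continuous_on_product_coordinates)

lemma dual_neg_dual_neg [simp]: "dual_neg (dual_neg \<gamma>) = \<gamma>"
  by (simp add: dual_neg_def)

lemma dual_neg_circle_homs: "\<gamma> \<in> circle_homs \<Longrightarrow> dual_neg \<gamma> \<in> circle_homs"
  unfolding circle_homs_def dual_neg_def by simp

lemma compact_dual_neg_image: "compact K \<Longrightarrow> compact (dual_neg ` K)"
  by (rule compact_continuous_image[OF continuous_on_subset[OF continuous_on_dual_neg]]) auto

lemma continuous_on_reflect:
  fixes h :: "('a::group_add \<Rightarrow> complex) \<Rightarrow> 'b::topological_space"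
  assumes "continuous_on circle_homs h"
  shows "continuous_on circle_homs (\<lambda>\<gamma>. h (dual_neg \<gamma>))"
  by (rule continuous_on_compose2[OF assms continuous_on_subset[OF continuous_on_dual_neg]])
    (auto simp: dual_neg_circle_homs)

lemma continuous_on_odd_part:
  fixes h :: "('a::group_add \<Rightarrow> complex) \<Rightarrow> 'b::topological_group_add"
  assumes "continuous_on circle_homs h"
  shows "continuous_on circle_homs (\<lambda>\<gamma>. h \<gamma> - h (dual_neg \<gamma>))"
  using assms continuous_on_reflect[OF assms] by (rule continuous_on_diff)

lemma Urysohn_reflected:
  fixes K C1 C2 :: "('a::group_add \<Rightarrow> complex) set"
  assumes "compact K" "K \<subseteq> circle_homs"
    and "compact C1" "C1 \<subseteq> circle_homs" "C1 \<inter> K = {}"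
    and "compact C2" "C2 \<subseteq> circle_homs" "C2 \<inter> dual_neg ` K = {}"
  obtains h :: "('a \<Rightarrow> complex) \<Rightarrow> real"
  where "continuous_on circle_homs h" "\<forall>\<gamma>\<in>circle_homs. 0 \<le> h \<gamma> \<and> h \<gamma> \<le> 1"
    "\<forall>\<gamma>\<in>K. h \<gamma> = 1" "\<forall>\<gamma>\<in>C1. h \<gamma> = 0" "\<forall>\<gamma>\<in>C2. h (dual_neg \<gamma>) = 0"
proof -
  let ?C = "C1 \<union> dual_neg ` C2"
  have "K \<inter> dual_neg ` C2 = {}"
  proof -
    have "\<delta> \<in> dual_neg ` K" if "dual_neg \<delta> \<in> K" for \<delta>
      using image_eqI[OF _ that, of _ dual_neg] by simp
    then show ?thesis
      using assms(8) by blast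
  qed
  then have disjoint: "K \<inter> ?C = {}"
    using assms(5) by blast
  have "dual_neg ` C2 \<subseteq> circle_homs"
    using assms(7) dual_neg_circle_homs by blast
  then have "?C \<subseteq> circle_homs"
    using assms(4) by blast
  then obtain h :: "('a \<Rightarrow> complex) \<Rightarrow> real"
    where h: "continuous_on circle_homs h" "\<And>\<gamma>. \<gamma> \<in> circle_homs \<Longrightarrow> 0 \<le> h \<gamma> \<and> h \<gamma> \<le> 1"
      "\<And>\<gamma>. \<gamma> \<in> K \<Longrightarrow> h \<gamma> = 1" "\<And>\<gamma>. \<gamma> \<in> ?C \<Longrightarrow> h \<gamma> = 0"
    using Urysohn_compact_fun[OF compact_circle_homs assms(1) compact_Un[OF assms(3) compact_dual_neg_image[OF assms(6)]]
        assms(2) _ disjoint] by blast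
  show ?thesis
    by (rule that[of h]) (use h in auto)
qed

(* Linear combinations of the characters gamma |-> cnj (gamma x), whose integrals are values of
   Fourier-Stieltjes transforms.  They are closed under products and conjugation only modulo the
   identities that hold on circle_homs, which is the form of the closure lemmas below. *)
inductive_set trig_poly :: "(('a \<Rightarrow> complex) \<Rightarrow> complex) set" where
  trig_poly_zero: "(\<lambda>_. 0) \<in> trig_poly"
| trig_poly_character: "(\<lambda>\<gamma>. c * cnj (\<gamma> x)) \<in> trig_poly"
| trig_poly_add: "P \<in> trig_poly \<Longrightarrow> Q \<in> trig_poly \<Longrightarrow> (\<lambda>\<gamma>. P \<gamma> + Q \<gamma>) \<in> trig_poly"

lemma continuous_on_trig_poly: "P \<in> trig_poly \<Longrightarrow> continuous_on UNIV P"
  by (induction rule: trig_poly.induct)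
    (auto intro!: continuous_on_add continuous_on_mult continuous_on_cnj continuous_on_product_coordinates)

lemma trig_poly_scale: "P \<in> trig_poly \<Longrightarrow> (\<lambda>\<gamma>. a * P \<gamma>) \<in> trig_poly"
proof (induction rule: trig_poly.induct)
  case trig_poly_zero
  then show ?case by (simp add: trig_poly.trig_poly_zero)
next
  case (trig_poly_character c x)
  then show ?case using trig_poly.trig_poly_character[of "a * c" x] by (simp add: mult.assoc)
next
  case (trig_poly_add P Q)
  then show ?case using trig_poly.trig_poly_add[of "\<lambda>\<gamma>. a * P \<gamma>" "\<lambda>\<gamma>. a * Q \<gamma>"]
    by (simp add: distrib_left)
qed

lemma trig_poly_cnj:
  assumes "P \<in> trig_poly"
  shows "\<exists>R\<in>trig_poly. \<forall>\<gamma>\<in>circle_homs. cnj (P \<gamma>) = R \<gamma>"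
  using assms
proof (induction rule: trig_poly.induct)
  case trig_poly_zero
  show ?case
    by (intro bexI[of _ "\<lambda>_. 0"] trig_poly.trig_poly_zero) simp
next
  case (trig_poly_character c x)
  show ?case
    by (intro bexI[of _ "\<lambda>\<gamma>. cnj c * cnj (\<gamma> (- x))"] trig_poly.trig_poly_character)
      (simp add: circle_homs_minus)
next
  case (trig_poly_add P Q)
  then obtain R1 R2 where "R1 \<in> trig_poly" "R2 \<in> trig_poly"
    "\<forall>\<gamma>\<in>circle_homs. cnj (P \<gamma>) = R1 \<gamma>" "\<forall>\<gamma>\<in>circle_homs. cnj (Q \<gamma>) = R2 \<gamma>"
    by blast
  then show ?case
    by (intro bexI[of _ "\<lambda>\<gamma>. R1 \<gamma> + R2 \<gamma>"] trig_poly.trig_poly_add) simp_all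
qed

lemma trig_poly_mult:
  assumes "P \<in> trig_poly" "Q \<in> trig_poly"
  shows "\<exists>R\<in>trig_poly. \<forall>\<gamma>\<in>circle_homs. P \<gamma> * Q \<gamma> = R \<gamma>"
  using assms
proof (induction rule: trig_poly.induct)
  case trig_poly_zero
  show ?case
    by (intro bexI[of _ "\<lambda>_. 0"] trig_poly.trig_poly_zero) simp
next
  case (trig_poly_character c x)
  from \<open>Q \<in> trig_poly\<close> show ?case
  proof (induction rule: trig_poly.induct)
    case trig_poly_zero
    show ?case
      by (intro bexI[of _ "\<lambda>_. 0"] trig_poly.trig_poly_zero) simp
  next
    case (trig_poly_character d y)
    show ?case
      by (intro bexI[of _ "\<lambda>\<gamma>. (c * d) * cnj (\<gamma> (x + y))"] trig_poly.trig_poly_character)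
        (simp add: circle_homs_add)
  next
    case (trig_poly_add Q1 Q2)
    then obtain R1 R2 where "R1 \<in> trig_poly" "R2 \<in> trig_poly"
      "\<forall>\<gamma>\<in>circle_homs. c * cnj (\<gamma> x) * Q1 \<gamma> = R1 \<gamma>"
      "\<forall>\<gamma>\<in>circle_homs. c * cnj (\<gamma> x) * Q2 \<gamma> = R2 \<gamma>"
      by blast
    then show ?case
      by (intro bexI[of _ "\<lambda>\<gamma>. R1 \<gamma> + R2 \<gamma>"] trig_poly.trig_poly_add) (simp_all add: distrib_left)
  qed
next
  case (trig_poly_add P1 P2)
  then obtain R1 R2 where "R1 \<in> trig_poly" "R2 \<in> trig_poly"
    "\<forall>\<gamma>\<in>circle_homs. P1 \<gamma> * Q \<gamma> = R1 \<gamma>" "\<forall>\<gamma>\<in>circle_homs. P2 \<gamma> * Q \<gamma> = R2 \<gamma>"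
    by blast
  then show ?case
    by (intro bexI[of _ "\<lambda>\<gamma>. R1 \<gamma> + R2 \<gamma>"] trig_poly.trig_poly_add) (simp_all add: distrib_right)
qed

definition re_trig_poly :: "(('a::group_add \<Rightarrow> complex) \<Rightarrow> real) set" where
  "re_trig_poly = {f. \<exists>P\<in>trig_poly. \<forall>\<gamma>\<in>circle_homs. f \<gamma> = Re (P \<gamma>)}"

lemma re_trig_polyI:
  "P \<in> trig_poly \<Longrightarrow> (\<And>\<gamma>. \<gamma> \<in> circle_homs \<Longrightarrow> f \<gamma> = Re (P \<gamma>)) \<Longrightarrow> f \<in> re_trig_poly"
  unfolding re_trig_poly_def by blast

lemma re_trig_polyE:
  assumes "f \<in> re_trig_poly"
  obtains P where "P \<in> trig_poly" "\<forall>\<gamma>\<in>circle_homs. f \<gamma> = Re (P \<gamma>)"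
  using assms unfolding re_trig_poly_def by blast

lemma continuous_on_re_trig_poly: "f \<in> re_trig_poly \<Longrightarrow> continuous_on circle_homs f"
proof (erule re_trig_polyE)
  fix P assume "P \<in> trig_poly" "\<forall>\<gamma>\<in>circle_homs. f \<gamma> = Re (P \<gamma>)"
  moreover have "continuous_on circle_homs (\<lambda>\<gamma>. Re (P \<gamma>))"
    using continuous_on_trig_poly[OF \<open>P \<in> trig_poly\<close>]
    by (intro continuous_on_Re) (rule continuous_on_subset, auto)
  ultimately show "continuous_on circle_homs f"
    using continuous_on_cong by force
qed

lemma re_trig_poly_add:
  assumes "f \<in> re_trig_poly" "g \<in> re_trig_poly"
  shows "(\<lambda>\<gamma>. f \<gamma> + g \<gamma>) \<in> re_trig_poly"
proof -
  obtain P where "P \<in> trig_poly" "\<forall>\<gamma>\<in>circle_homs. f \<gamma> = Re (P \<gamma>)"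
    using assms(1) by (rule re_trig_polyE)
  moreover obtain Q where "Q \<in> trig_poly" "\<forall>\<gamma>\<in>circle_homs. g \<gamma> = Re (Q \<gamma>)"
    using assms(2) by (rule re_trig_polyE)
  ultimately show ?thesis
    by (intro re_trig_polyI[OF trig_poly_add]) simp_all
qed

lemma re_trig_poly_mult:
  assumes "f \<in> re_trig_poly" "g \<in> re_trig_poly"
  shows "(\<lambda>\<gamma>. f \<gamma> * g \<gamma>) \<in> re_trig_poly"
proof -
  obtain P where P: "P \<in> trig_poly" "\<forall>\<gamma>\<in>circle_homs. f \<gamma> = Re (P \<gamma>)"
    using assms(1) by (rule re_trig_polyE)
  obtain Q where Q: "Q \<in> trig_poly" "\<forall>\<gamma>\<in>circle_homs. g \<gamma> = Re (Q \<gamma>)"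
    using assms(2) by (rule re_trig_polyE)
  obtain Q' where Q': "Q' \<in> trig_poly" "\<forall>\<gamma>\<in>circle_homs. cnj (Q \<gamma>) = Q' \<gamma>"
    using trig_poly_cnj[OF Q(1)] by blast
  obtain S where S: "S \<in> trig_poly" "\<forall>\<gamma>\<in>circle_homs. P \<gamma> * (Q \<gamma> + Q' \<gamma>) = S \<gamma>"
    using trig_poly_mult[OF P(1) trig_poly_add[OF Q(1) Q'(1)]] by blast
  \<comment> \<open>\<open>Re P * Re Q = Re (P * (Q + cnj Q) / 2)\<close>\<close>
  have "f \<gamma> * g \<gamma> = Re (1 / 2 * S \<gamma>)" if "\<gamma> \<in> circle_homs" for \<gamma>
  proof -
    have "S \<gamma> = P \<gamma> * complex_of_real (2 * Re (Q \<gamma>))"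
      using Q'(2) S(2) that by (metis complex_add_cnj)
    then show ?thesis
      using P(2) Q(2) that by simp
  qed
  then show ?thesis
    by (intro re_trig_polyI[OF trig_poly_scale[OF S(1)]])
qed

lemma re_trig_poly_const: "(\<lambda>_. c) \<in> re_trig_poly"
  by (rule re_trig_polyI[OF trig_poly_character[of "complex_of_real c" 0]]) (simp add: circle_homs_zero)

lemma re_trig_poly_separating:
  assumes "\<gamma> \<noteq> \<delta>"
  shows "\<exists>f\<in>re_trig_poly. f \<gamma> \<noteq> f \<delta>"
proof -
  obtain x where x: "\<gamma> x \<noteq> \<delta> x"
    using assms by blast
  have Re: "(\<lambda>\<gamma>. Re (1 * cnj (\<gamma> x))) \<in> re_trig_poly" and Im: "(\<lambda>\<gamma>. Re (\<i> * cnj (\<gamma> x))) \<in> re_trig_poly"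
    by (rule re_trig_polyI[OF trig_poly_character], rule refl)+
  show ?thesis
  proof (cases "Re (\<gamma> x) = Re (\<delta> x)")
    case True
    then have "Im (\<gamma> x) \<noteq> Im (\<delta> x)"
      using x complex_eqI by blast
    then show ?thesis
      using Im by (intro bexI[of _ "\<lambda>\<gamma>. Re (\<i> * cnj (\<gamma> x))"]) simp_all
  next
    case False
    then show ?thesis
      using Re by (intro bexI[of _ "\<lambda>\<gamma>. Re (1 * cnj (\<gamma> x))"]) simp_all
  qed
qed

lemma trig_poly_dense:
  fixes h :: "('a::group_add \<Rightarrow> complex) \<Rightarrow> real"
  assumes "continuous_on circle_homs h" "0 < e"
  shows "\<exists>P\<in>trig_poly. \<forall>\<gamma>\<in>circle_homs. \<bar>h \<gamma> - Re (P \<gamma>)\<bar> < e"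
proof -
  have "\<exists>f\<in>re_trig_poly. \<forall>\<gamma>\<in>circle_homs. \<bar>h \<gamma> - f \<gamma>\<bar> < e"
    by (rule Stone_Weierstrass_fun[OF compact_circle_homs _ _ _ _ _ assms])
      (simp_all add: continuous_on_re_trig_poly re_trig_poly_add re_trig_poly_mult re_trig_poly_const
        re_trig_poly_separating)
  then obtain f where "f \<in> re_trig_poly" "\<forall>\<gamma>\<in>circle_homs. \<bar>h \<gamma> - f \<gamma>\<bar> < e"
    by blast
  then show ?thesis
    by (elim re_trig_polyE) auto
qed

section \<open>The dual group as a measurable space\<close>

lemma dual_group_subset_circle_homs: "dual_group \<subseteq> circle_homs"
  by (auto simp: dual_group_def circle_homs_def)

lemma dual_neg_dual_group: "\<gamma> \<in> dual_group \<Longrightarrow> dual_neg \<gamma> \<in> dual_group"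
  by (auto simp: dual_group_def dual_neg_def intro: continuous_on_cnj)

lemma topspace_dual_topology: "topspace dual_topology = dual_group"
proof -
  have "{\<gamma> \<in> dual_group. \<gamma> ` {} \<subseteq> UNIV} \<in> {{\<gamma> \<in> dual_group. \<gamma> ` K \<subseteq> V} | K V. compact K \<and> open V}"
    by blast
  then show ?thesis
    unfolding dual_topology_def by (auto simp del: image_empty)
qed

lemma openin_dual_topology_eval:
  assumes "open V"
  shows "openin dual_topology {\<gamma> \<in> dual_group. \<gamma> x \<in> V}"
proof -
  have "{\<gamma> \<in> dual_group. \<gamma> x \<in> V} = {\<gamma> \<in> dual_group. \<gamma> ` {x} \<subseteq> V}"
    by auto
  also have "\<dots> \<in> {{\<gamma> \<in> dual_group. \<gamma> ` K \<subseteq> V} | K V. compact K \<and> open V}"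
    using assms by (intro CollectI exI[of _ "{x}"] exI[of _ V]) auto
  finally show ?thesis
    unfolding dual_topology_def openin_topology_generated_by_iff
    by (rule generate_topology_on.Basis)
qed

(* The compact-open topology is finer than the topology of pointwise convergence. *)
lemma continuous_map_dual_topology:
  "continuous_map dual_topology euclidean (\<lambda>\<gamma>::'a::{topological_ab_group_add,t2_space} \<Rightarrow> complex. \<gamma>)"
proof -
  have "continuous_map dual_topology euclidean (\<lambda>\<gamma>::'a \<Rightarrow> complex. \<gamma> x)" for x
    unfolding continuous_map_def topspace_dual_topology
    by (auto simp: openin_dual_topology_eval simp flip: open_openin)
  then have "continuous_map dual_topology (product_topology (\<lambda>_. euclidean) UNIV) (\<lambda>\<gamma>::'a \<Rightarrow> complex. \<gamma>)"
    unfolding continuous_map_componentwise_UNIV by blast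
  then show ?thesis
    by (simp only: euclidean_product_topology)
qed

lemma compactin_dual_topology_imp_compact: "compactin dual_topology K \<Longrightarrow> compact K"
  using image_compactin[OF _ continuous_map_dual_topology] by fastforce

lemma openin_dual_topology_Int:
  assumes "open W"
  shows "openin dual_topology (W \<inter> dual_group)"
proof -
  have "openin euclidean W"
    using assms by (rule open_openin[THEN iffD1])
  then have "openin dual_topology {\<gamma> \<in> topspace dual_topology. \<gamma> \<in> W}"
    using continuous_map_dual_topology unfolding continuous_map_def by blast
  moreover have "{\<gamma> \<in> topspace dual_topology. \<gamma> \<in> W} = W \<inter> dual_group"
    unfolding topspace_dual_topology by blast
  ultimately show ?thesis
    by simp
qed

lemma space_dual_borel: "space dual_borel = dual_group"
  and sets_dual_borel: "sets dual_borel = sigma_sets dual_group {S. openin dual_topology S}"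
proof -
  have "{S. openin dual_topology S} \<subseteq> Pow (topspace dual_topology)"
    using openin_subset by blast
  then show "space dual_borel = dual_group"
    and "sets dual_borel = sigma_sets dual_group {S. openin dual_topology S}"
    unfolding dual_borel_def using space_measure_of sets_measure_of
    by (simp_all add: topspace_dual_topology)
qed

lemma openin_dual_topology_imp_sets: "openin dual_topology S \<Longrightarrow> S \<in> sets dual_borel"
  unfolding sets_dual_borel by (rule sigma_sets.Basic) simp

lemma compact_dual_borel:
  assumes "compact K" "K \<subseteq> dual_group"
  shows "K \<in> sets dual_borel"
proof -
  have "open (- K)"
    using compact_imp_closed_fun[OF assms(1)] by (rule open_Compl)
  then have "- K \<inter> dual_group \<in> sets dual_borel"
    by (rule openin_dual_topology_imp_sets[OF openin_dual_topology_Int])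
  then have "space dual_borel - (- K \<inter> dual_group) \<in> sets dual_borel"
    by (rule sets.compl_sets)
  moreover have "space dual_borel - (- K \<inter> dual_group) = K"
    using assms(2) unfolding space_dual_borel by blast
  ultimately show ?thesis
    by metis
qed

lemma borel_measurable_dual_borel:
  assumes "continuous_on S h" "dual_group \<subseteq> S"
  shows "h \<in> borel_measurable dual_borel"
proof (rule borel_measurableI)
  fix V :: "'b set" assume "open V"
  then obtain W where "open W" "W \<inter> S = h -` V \<inter> S"
    using assms(1) unfolding continuous_on_open_invariant by blast
  then have "h -` V \<inter> space dual_borel = W \<inter> dual_group"
    using assms(2) unfolding space_dual_borel by auto
  then show "h -` V \<inter> space dual_borel \<in> sets dual_borel"
    using openin_dual_topology_imp_sets[OF openin_dual_topology_Int[OF \<open>open W\<close>]] by simp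
qed

section \<open>Regular probability measures on the dual group\<close>

lemma (in prob_space) abs_integral_diff_le:
  fixes f g :: "'a \<Rightarrow> real"
  assumes "integrable M f" "integrable M g" "\<And>x. x \<in> space M \<Longrightarrow> \<bar>f x - g x\<bar> \<le> e"
  shows "\<bar>integral\<^sup>L M f - integral\<^sup>L M g\<bar> \<le> e"
proof -
  have "integral\<^sup>L M f - integral\<^sup>L M g = (\<integral>x. f x - g x \<partial>M)"
    using assms(1,2) by simp
  moreover have "(\<integral>x. f x - g x \<partial>M) \<le> (\<integral>x. e \<partial>M)" "(\<integral>x. g x - f x \<partial>M) \<le> (\<integral>x. e \<partial>M)"
    using assms by (intro integral_mono; force)+
  moreover have "(\<integral>x. g x - f x \<partial>M) = - (\<integral>x. f x - g x \<partial>M)"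
    using assms(1,2) by simp
  ultimately show ?thesis
    by (simp add: prob_space)
qed

lemma (in finite_measure) measure_le_integral:
  fixes f :: "'a \<Rightarrow> real"
  assumes "A \<in> sets M" "integrable M f" "\<And>x. x \<in> space M \<Longrightarrow> indicator A x \<le> f x"
  shows "measure M A \<le> integral\<^sup>L M f"
proof -
  have "integrable M (indicator A :: 'a \<Rightarrow> real)"
    using assms(1) by (simp add: less_top[symmetric])
  then have "(\<integral>x. indicator A x \<partial>M) \<le> integral\<^sup>L M f"
    using assms by (intro integral_mono) auto
  then show ?thesis
    using sets.sets_into_space[OF assms(1)] by (simp add: Int_absorb2)
qed

lemma (in finite_measure) integral_le_measure:
  fixes f :: "'a \<Rightarrow> real"
  assumes "A \<in> sets M" "integrable M f" "\<And>x. x \<in> space M \<Longrightarrow> f x \<le> indicator A x"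
  shows "integral\<^sup>L M f \<le> measure M A"
proof -
  have "integrable M (indicator A :: 'a \<Rightarrow> real)"
    using assms(1) by (simp add: less_top[symmetric])
  then have "integral\<^sup>L M f \<le> (\<integral>x. indicator A x \<partial>M)"
    using assms by (intro integral_mono) auto
  then show ?thesis
    using sets.sets_into_space[OF assms(1)] by (simp add: Int_absorb2)
qed

lemma prob_space_eqI_measure_le:
  assumes "prob_space M" "prob_space N" and sets: "sets M = sets N"
    and le: "\<And>A. A \<in> sets M \<Longrightarrow> measure M A \<le> measure N A"
  shows "M = N"
proof (rule measure_eqI[OF sets])
  interpret M: prob_space M by fact
  interpret N: prob_space N by fact
  fix A assume A: "A \<in> sets M"
  then have "space M - A \<in> sets M"
    by auto
  then have "measure M (space M - A) \<le> measure N (space N - A)"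
    using le sets_eq_imp_space_eq[OF sets] by metis
  then have "measure M A = measure N A"
    using le[OF A] M.prob_compl[OF A] N.prob_compl[of A] A sets by simp
  then show "emeasure M A = emeasure N A"
    by (simp add: M.emeasure_eq_measure N.emeasure_eq_measure)
qed

lemma dual_prob_measureD:
  assumes "dual_prob_measure M"
  shows "prob_space M" "space M = dual_group" "sets M = sets dual_borel"
  using assms by (simp_all add: dual_prob_measure_def space_dual_borel)

lemma integrable_dual_prob_measure:
  fixes h :: "('a::{topological_ab_group_add,t2_space} \<Rightarrow> complex) \<Rightarrow> 'b::{banach,second_countable_topology}"
  assumes M: "dual_prob_measure M" and h: "continuous_on circle_homs h"
  shows "integrable M h"
proof -
  interpret prob_space M
    using dual_prob_measureD(1)[OF M] .
  obtain B where B: "\<forall>\<gamma>\<in>circle_homs. norm (h \<gamma>) \<le> B"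
    using compact_imp_bounded[OF compact_continuous_image[OF h compact_circle_homs]]
    unfolding bounded_iff by blast
  have "h \<in> borel_measurable M"
    using borel_measurable_dual_borel[OF h dual_group_subset_circle_homs]
    by (simp add: measurable_cong_sets[OF dual_prob_measureD(3)[OF M] refl])
  moreover have "AE \<gamma> in M. norm (h \<gamma>) \<le> B"
    using B dual_group_subset_circle_homs dual_prob_measureD(2)[OF M] by (intro AE_I2) blast
  ultimately show ?thesis
    using integrable_const_bound by blast
qed

lemma dual_prob_measure_outer_regular:
  assumes M: "dual_prob_measure M" and "E \<in> sets M" "0 < e"
  obtains V where "openin dual_topology V" "E \<subseteq> V" "measure M V < measure M E + e"
proof -
  interpret prob_space M
    using dual_prob_measureD(1)[OF M] .
  have regular: "emeasure M E = (INF V \<in> {V. openin dual_topology V \<and> E \<subseteq> V}. emeasure M V)"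
    using M \<open>E \<in> sets M\<close> unfolding dual_prob_measure_def by blast
  have "(INF V \<in> {V. openin dual_topology V \<and> E \<subseteq> V}. emeasure M V) < ennreal (measure M E + e)"
    unfolding regular[symmetric] using \<open>0 < e\<close> by (simp add: emeasure_eq_measure ennreal_lessI)
  then obtain V where "openin dual_topology V" "E \<subseteq> V" "emeasure M V < ennreal (measure M E + e)"
    unfolding INF_less_iff by blast
  then show ?thesis
    by (intro that) (auto simp: emeasure_eq_measure ennreal_less_iff)
qed

lemma dual_prob_measure_inner_regular:
  assumes M: "dual_prob_measure M" and "E \<in> sets M" "0 < e"
  obtains K where "compactin dual_topology K" "K \<subseteq> E" "measure M E < measure M K + e"
proof (cases "measure M E < e")
  case True
  then show ?thesis
    by (intro that[of "{}"]) auto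
next
  case False
  interpret prob_space M
    using dual_prob_measureD(1)[OF M] .
  have "ennreal (measure M E - e) < emeasure M E"
    using False \<open>0 < e\<close> by (simp add: emeasure_eq_measure ennreal_less_iff)
  also have "\<dots> = (SUP K \<in> {K. compactin dual_topology K \<and> K \<subseteq> E}. emeasure M K)"
    using M \<open>E \<in> sets M\<close> unfolding dual_prob_measure_def by blast
  finally obtain K where "compactin dual_topology K" "K \<subseteq> E" "ennreal (measure M E - e) < emeasure M K"
    unfolding less_SUP_iff by blast
  then show ?thesis
    using False by (intro that) (auto simp: emeasure_eq_measure ennreal_less_iff)
qed

lemma dual_prob_measure_compact_disjoint:
  assumes M: "dual_prob_measure M" and "E \<in> sets M" "0 < e"
  obtains C where "compact C" "C \<subseteq> dual_group" "C \<inter> E = {}"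
    "measure M (dual_group - C) < measure M E + e"
proof -
  interpret prob_space M
    using dual_prob_measureD(1)[OF M] .
  have sets_M: "sets M = sets dual_borel" and space_M: "space M = dual_group"
    using dual_prob_measureD[OF M] by auto
  have half_e: "0 < e / 2"
    using \<open>0 < e\<close> by simp
  obtain V where V: "openin dual_topology V" "E \<subseteq> V" "measure M V < measure M E + e / 2"
    using dual_prob_measure_outer_regular[OF M \<open>E \<in> sets M\<close> half_e] .
  obtain L where L: "compactin dual_topology L" "L \<subseteq> space M" "measure M (space M) < measure M L + e / 2"
    using dual_prob_measure_inner_regular[OF M sets.top half_e] .
  define C where "C = L \<inter> (topspace dual_topology - V)"
  have "compactin dual_topology C"
    unfolding C_def using L(1) V(1) by (intro compact_Int_closedin closedin_diff) auto
  then have C: "compact C" "C \<subseteq> dual_group"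
    using compactin_dual_topology_imp_compact compactin_subset_topspace[of dual_topology C]
    by (auto simp: topspace_dual_topology)
  have sets: "C \<in> sets M" "V \<in> sets M" "L \<in> sets M"
    using C compact_dual_borel openin_dual_topology_imp_sets[OF V(1)]
      compact_dual_borel[OF compactin_dual_topology_imp_compact[OF L(1)]]
      compactin_subset_topspace[OF L(1)]
    by (auto simp: sets_M topspace_dual_topology)
  have "measure M L \<le> measure M (C \<union> V)"
    using sets compactin_subset_topspace[OF L(1)] by (intro finite_measure_mono) (auto simp: C_def)
  also have "\<dots> \<le> measure M C + measure M V"
    using sets by (intro measure_subadditive) auto
  finally have "measure M (dual_group - C) < measure M E + e"
    using L(3) V(3) prob_compl[OF sets(1)] prob_space unfolding space_M by linarith
  moreover have "C \<inter> E = {}"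
    using V(2) by (auto simp: C_def)
  ultimately show ?thesis
    using C that by blast
qed

lemma integral_bounds_by_measure:
  fixes M :: "('a::{topological_ab_group_add,t2_space} \<Rightarrow> complex) measure"
    and h :: "('a \<Rightarrow> complex) \<Rightarrow> real"
  assumes M: "dual_prob_measure M"
    and h: "continuous_on circle_homs h" "\<forall>\<gamma>\<in>circle_homs. 0 \<le> h \<gamma> \<and> h \<gamma> \<le> 1"
    and K: "compact K" "K \<subseteq> dual_group" "\<forall>\<gamma>\<in>K. h \<gamma> = 1"
    and C: "compact C" "C \<subseteq> dual_group" "\<forall>\<gamma>\<in>C. h \<gamma> = 0"
  shows "measure M K \<le> (\<integral>\<gamma>. h \<gamma> \<partial>M)" "(\<integral>\<gamma>. h \<gamma> \<partial>M) \<le> measure M (dual_group - C)"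
proof -
  interpret prob_space M
    using dual_prob_measureD(1)[OF M] .
  have space: "space M = dual_group"
    using dual_prob_measureD(2)[OF M] .
  have sets: "K \<in> sets M" "dual_group - C \<in> sets M"
    using compact_dual_borel[OF K(1,2)] compact_dual_borel[OF C(1,2)] dual_prob_measureD(3)[OF M]
      sets.compl_sets[of C M] space by auto
  have int: "integrable M h"
    using M h(1) by (rule integrable_dual_prob_measure)
  have h_bounds: "0 \<le> h \<gamma> \<and> h \<gamma> \<le> 1" if "\<gamma> \<in> space M" for \<gamma>
    using h(2) dual_group_subset_circle_homs that space by auto
  show "measure M K \<le> (\<integral>\<gamma>. h \<gamma> \<partial>M)"
    using h_bounds K(3) by (intro measure_le_integral[OF sets(1) int]) (auto split: split_indicator)
  show "(\<integral>\<gamma>. h \<gamma> \<partial>M) \<le> measure M (dual_group - C)"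
    using h_bounds C(3) space by (intro integral_le_measure[OF sets(2) int]) (auto split: split_indicator)
qed

section \<open>The odd part of a measure\<close>

lemma integral_odd_character:
  assumes M: "dual_prob_measure M"
  shows "(\<integral>\<gamma>. c * cnj (\<gamma> x) - c * cnj (dual_neg \<gamma> x) \<partial>M)
    = c * (2 * \<i> * Im (fourier_stieltjes M x))"
proof -
  have "integrable M (\<lambda>\<gamma>. cnj (\<gamma> x))" "integrable M (\<lambda>\<gamma>. \<gamma> x)"
    using M by (auto intro!: integrable_dual_prob_measure continuous_on_cnj
        continuous_on_subset[OF continuous_on_product_coordinates])
  then have "(\<integral>\<gamma>. c * cnj (\<gamma> x) - c * cnj (dual_neg \<gamma> x) \<partial>M)
      = c * (fourier_stieltjes M x - cnj (fourier_stieltjes M x))"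
    by (simp add: dual_neg_def fourier_stieltjes_def right_diff_distrib)
  then show ?thesis
    by (simp add: complex_diff_cnj mult.commute)
qed

lemma integrable_odd_trig_poly:
  "dual_prob_measure M \<Longrightarrow> P \<in> trig_poly \<Longrightarrow> integrable M (\<lambda>\<gamma>. P \<gamma> - P (dual_neg \<gamma>))"
  by (intro integrable_dual_prob_measure continuous_on_odd_part
      continuous_on_subset[OF continuous_on_trig_poly]) auto

lemma odd_integral_trig_poly_eq:
  assumes \<mu>: "dual_prob_measure \<mu>" and \<nu>: "dual_prob_measure \<nu>"
    and Im: "\<And>x. Im (fourier_stieltjes \<mu> x) = Im (fourier_stieltjes \<nu> x)"
    and "P \<in> trig_poly"
  shows "(\<integral>\<gamma>. P \<gamma> - P (dual_neg \<gamma>) \<partial>\<mu>) = (\<integral>\<gamma>. P \<gamma> - P (dual_neg \<gamma>) \<partial>\<nu>)"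
  using \<open>P \<in> trig_poly\<close>
proof (induction rule: trig_poly.induct)
  case trig_poly_zero
  show ?case by simp
next
  case (trig_poly_character c x)
  show ?case
    by (simp only: integral_odd_character[OF \<mu>] integral_odd_character[OF \<nu>] Im)
next
  case (trig_poly_add P Q)
  have "(\<integral>\<gamma>. (P \<gamma> + Q \<gamma>) - (P (dual_neg \<gamma>) + Q (dual_neg \<gamma>)) \<partial>M)
      = (\<integral>\<gamma>. P \<gamma> - P (dual_neg \<gamma>) \<partial>M) + (\<integral>\<gamma>. Q \<gamma> - Q (dual_neg \<gamma>) \<partial>M)"
    if "dual_prob_measure M" for M
  proof -
    have "(\<lambda>\<gamma>. (P \<gamma> + Q \<gamma>) - (P (dual_neg \<gamma>) + Q (dual_neg \<gamma>)))
        = (\<lambda>\<gamma>. (P \<gamma> - P (dual_neg \<gamma>)) + (Q \<gamma> - Q (dual_neg \<gamma>)))"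
      by (simp add: fun_eq_iff algebra_simps)
    then show ?thesis
      using Bochner_Integration.integral_add[OF integrable_odd_trig_poly[OF that trig_poly_add.hyps(1)]
          integrable_odd_trig_poly[OF that trig_poly_add.hyps(2)]]
      by simp
  qed
  then show ?case
    using trig_poly_add.IH \<mu> \<nu> by simp
qed

lemma odd_integral_eq:
  fixes h :: "('a::{topological_ab_group_add,t2_space} \<Rightarrow> complex) \<Rightarrow> real"
  assumes \<mu>: "dual_prob_measure \<mu>" and \<nu>: "dual_prob_measure \<nu>"
    and Im: "\<And>x. Im (fourier_stieltjes \<mu> x) = Im (fourier_stieltjes \<nu> x)"
    and h: "continuous_on circle_homs h"
  shows "(\<integral>\<gamma>. h \<gamma> - h (dual_neg \<gamma>) \<partial>\<mu>) = (\<integral>\<gamma>. h \<gamma> - h (dual_neg \<gamma>) \<partial>\<nu>)"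
proof -
  let ?odd = "\<lambda>f M. \<integral>\<gamma>. f \<gamma> - f (dual_neg \<gamma>) \<partial>M"
  have "\<bar>?odd h \<mu> - ?odd h \<nu>\<bar> \<le> e" if "0 < e" for e
  proof -
    obtain P where P: "P \<in> trig_poly" "\<forall>\<gamma>\<in>circle_homs. \<bar>h \<gamma> - Re (P \<gamma>)\<bar> < e / 4"
      using trig_poly_dense[OF h, of "e / 4"] \<open>0 < e\<close> by auto
    have Re_P: "?odd (\<lambda>\<gamma>. Re (P \<gamma>)) M = Re (?odd P M)" if "dual_prob_measure M" for M
      using integral_Re[OF integrable_odd_trig_poly[OF that P(1)]] by simp
    have approx: "\<bar>?odd h M - ?odd (\<lambda>\<gamma>. Re (P \<gamma>)) M\<bar> \<le> e / 2" if M: "dual_prob_measure M" for M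
    proof (rule prob_space.abs_integral_diff_le[OF dual_prob_measureD(1)[OF M]])
      show "integrable M (\<lambda>\<gamma>. h \<gamma> - h (dual_neg \<gamma>))"
        by (rule integrable_dual_prob_measure[OF M continuous_on_odd_part[OF h]])
      show "integrable M (\<lambda>\<gamma>. Re (P \<gamma>) - Re (P (dual_neg \<gamma>)))"
        using integrable_Re[OF integrable_odd_trig_poly[OF M P(1)]] by simp
      fix \<gamma> assume "\<gamma> \<in> space M"
      then have "\<gamma> \<in> circle_homs" "dual_neg \<gamma> \<in> circle_homs"
        using dual_prob_measureD(2)[OF M] dual_group_subset_circle_homs dual_neg_circle_homs by auto
      then have "\<bar>h \<gamma> - Re (P \<gamma>)\<bar> < e / 4" "\<bar>h (dual_neg \<gamma>) - Re (P (dual_neg \<gamma>))\<bar> < e / 4"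
        using P(2) by blast+
      then show "\<bar>(h \<gamma> - h (dual_neg \<gamma>)) - (Re (P \<gamma>) - Re (P (dual_neg \<gamma>)))\<bar> \<le> e / 2"
        by linarith
    qed
    have "?odd (\<lambda>\<gamma>. Re (P \<gamma>)) \<mu> = ?odd (\<lambda>\<gamma>. Re (P \<gamma>)) \<nu>"
      unfolding Re_P[OF \<mu>] Re_P[OF \<nu>] odd_integral_trig_poly_eq[OF \<mu> \<nu> Im P(1)] ..
    then show ?thesis
      using approx[OF \<mu>] approx[OF \<nu>] by linarith
  qed
  then show ?thesis
    using dense_eq0_I[of "?odd h \<mu> - ?odd h \<nu>"] by simp
qed

lemma measure_odd_part_le:
  fixes \<mu> \<nu> :: "('a::{topological_ab_group_add,t2_space} \<Rightarrow> complex) measure"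
  assumes \<mu>: "dual_prob_measure \<mu>" and \<nu>: "dual_prob_measure \<nu>"
    and Im: "\<And>x. Im (fourier_stieltjes \<mu> x) = Im (fourier_stieltjes \<nu> x)"
    and K: "compact K" "K \<subseteq> dual_group"
  shows "measure \<mu> K - measure \<mu> (dual_neg ` K) \<le> measure \<nu> K - measure \<nu> (dual_neg ` K)"
proof (rule field_le_epsilon)
  fix e :: real assume "0 < e"
  let ?K' = "dual_neg ` K"
  have K': "compact ?K'" "?K' \<subseteq> dual_group"
    using K compact_dual_neg_image dual_neg_dual_group by auto
  have half_e: "0 < e / 2"
    using \<open>0 < e\<close> by simp
  have sets: "K \<in> sets \<nu>" "?K' \<in> sets \<mu>"
    using compact_dual_borel[OF K] compact_dual_borel[OF K'] dual_prob_measureD(3)[OF \<mu>]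
      dual_prob_measureD(3)[OF \<nu>] by simp_all
  obtain C1 where C1: "compact C1" "C1 \<subseteq> dual_group" "C1 \<inter> K = {}"
    "measure \<nu> (dual_group - C1) < measure \<nu> K + e / 2"
    using dual_prob_measure_compact_disjoint[OF \<nu> sets(1) half_e] .
  obtain C2 where C2: "compact C2" "C2 \<subseteq> dual_group" "C2 \<inter> ?K' = {}"
    "measure \<mu> (dual_group - C2) < measure \<mu> ?K' + e / 2"
    using dual_prob_measure_compact_disjoint[OF \<mu> sets(2) half_e] .
  obtain h :: "('a \<Rightarrow> complex) \<Rightarrow> real"
    where h: "continuous_on circle_homs h" "\<forall>\<gamma>\<in>circle_homs. 0 \<le> h \<gamma> \<and> h \<gamma> \<le> 1"
      "\<forall>\<gamma>\<in>K. h \<gamma> = 1" "\<forall>\<gamma>\<in>C1. h \<gamma> = 0" "\<forall>\<gamma>\<in>C2. h (dual_neg \<gamma>) = 0"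
    using Urysohn_reflected[OF K(1) _ C1(1) _ C1(3) C2(1) _ C2(3)] K(2) C1(2) C2(2)
      dual_group_subset_circle_homs by blast
  let ?h' = "\<lambda>\<gamma>. h (dual_neg \<gamma>)"
  have h': "continuous_on circle_homs ?h'" "\<forall>\<gamma>\<in>circle_homs. 0 \<le> ?h' \<gamma> \<and> ?h' \<gamma> \<le> 1"
    "\<forall>\<gamma>\<in>?K'. ?h' \<gamma> = 1"
    using continuous_on_reflect[OF h(1)] h(2,3) dual_neg_circle_homs by auto
  note bounds = integral_bounds_by_measure[OF _ h(1,2) K h(3) C1(1,2) h(4)]
    integral_bounds_by_measure[OF _ h'(1,2) K' h'(3) C2(1,2) h(5)]
  have "(\<integral>\<gamma>. h \<gamma> \<partial>\<mu>) - (\<integral>\<gamma>. ?h' \<gamma> \<partial>\<mu>) = (\<integral>\<gamma>. h \<gamma> \<partial>\<nu>) - (\<integral>\<gamma>. ?h' \<gamma> \<partial>\<nu>)"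
    using odd_integral_eq[OF \<mu> \<nu> Im h(1)]
      integrable_dual_prob_measure[OF \<mu> h(1)] integrable_dual_prob_measure[OF \<mu> h'(1)]
      integrable_dual_prob_measure[OF \<nu> h(1)] integrable_dual_prob_measure[OF \<nu> h'(1)]
    by simp
  then show "measure \<mu> K - measure \<mu> ?K' \<le> measure \<nu> K - measure \<nu> ?K' + e"
    using bounds(1)[OF \<mu>] bounds(2)[OF \<nu>] bounds(3)[OF \<nu>] bounds(4)[OF \<mu>] C1(4) C2(4)
    by linarith
qed

lemma measure_odd_part_eq:
  fixes \<mu> \<nu> :: "('a::{topological_ab_group_add,t2_space} \<Rightarrow> complex) measure"
  assumes "dual_prob_measure \<mu>" "dual_prob_measure \<nu>"
    and "\<And>x. Im (fourier_stieltjes \<mu> x) = Im (fourier_stieltjes \<nu> x)"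
    and "compact K" "K \<subseteq> dual_group"
  shows "measure \<mu> K - measure \<mu> (dual_neg ` K) = measure \<nu> K - measure \<nu> (dual_neg ` K)"
  using measure_odd_part_le[OF assms] measure_odd_part_le[OF assms(2,1) assms(3)[symmetric] assms(4,5)]
  by linarith

lemma measure_le_within_concentration_set:
  fixes \<mu> \<nu> :: "('a::{topological_ab_group_add,t2_space} \<Rightarrow> complex) measure"
  assumes \<mu>: "dual_prob_measure \<mu>" and \<nu>: "dual_prob_measure \<nu>"
    and Im: "\<And>x. Im (fourier_stieltjes \<mu> x) = Im (fourier_stieltjes \<nu> x)"
    and U: "U \<in> sets dual_borel" "U \<inter> {\<gamma> \<in> dual_group. dual_neg \<gamma> \<in> U} = {}"
      "measure \<mu> (dual_group - U) = 0"
    and F: "F \<in> sets dual_borel" "F \<subseteq> U"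
  shows "measure \<mu> F \<le> measure \<nu> F"
proof (rule field_le_epsilon)
  interpret \<mu>: prob_space \<mu>
    using dual_prob_measureD(1)[OF \<mu>] .
  interpret \<nu>: prob_space \<nu>
    using dual_prob_measureD(1)[OF \<nu>] .
  have sets: "sets \<mu> = sets dual_borel" "sets \<nu> = sets dual_borel"
    using dual_prob_measureD(3)[OF \<mu>] dual_prob_measureD(3)[OF \<nu>] by auto
  fix e :: real assume "0 < e"
  obtain K where K: "compactin dual_topology K" "K \<subseteq> F" "measure \<mu> F < measure \<mu> K + e"
    using dual_prob_measure_inner_regular[OF \<mu> _ \<open>0 < e\<close>] F(1) sets by blast
  have K_dual: "compact K" "K \<subseteq> dual_group"
    using compactin_dual_topology_imp_compact[OF K(1)] compactin_subset_topspace[OF K(1)]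
    by (simp_all add: topspace_dual_topology)
  have "dual_neg ` K \<subseteq> dual_group - U"
  proof
    fix \<delta> assume "\<delta> \<in> dual_neg ` K"
    then obtain \<gamma> where "\<gamma> \<in> K" "\<delta> = dual_neg \<gamma>"
      by blast
    then have "\<delta> \<in> dual_group" "dual_neg \<delta> \<in> U"
      using K(2) F(2) K_dual(2) dual_neg_dual_group by auto
    then show "\<delta> \<in> dual_group - U"
      using U(2) by blast
  qed
  moreover have "dual_group - U \<in> sets \<mu>"
    using U(1) sets dual_prob_measureD(2)[OF \<mu>] by (metis sets.compl_sets)
  ultimately have "measure \<mu> (dual_neg ` K) \<le> measure \<mu> (dual_group - U)"
    by (rule \<mu>.finite_measure_mono)
  then have "measure \<mu> (dual_neg ` K) = 0"
    using U(3) measure_nonneg[of \<mu> "dual_neg ` K"] by linarith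
  then have "measure \<mu> K \<le> measure \<nu> K"
    using measure_odd_part_eq[OF \<mu> \<nu> Im K_dual] measure_nonneg[of \<nu> "dual_neg ` K"] by linarith
  also have "\<dots> \<le> measure \<nu> F"
    using K(2) F(1) sets by (intro \<nu>.finite_measure_mono) auto
  finally show "measure \<mu> F \<le> measure \<nu> F + e"
    using K(3) by linarith
qed

lemma dual_prob_measure_le_if_concentrated:
  fixes \<mu> \<nu> :: "('a::{topological_ab_group_add,t2_space} \<Rightarrow> complex) measure"
  assumes \<mu>: "dual_prob_measure \<mu>" and \<nu>: "dual_prob_measure \<nu>"
    and Im: "\<And>x. Im (fourier_stieltjes \<mu> x) = Im (fourier_stieltjes \<nu> x)"
    and U: "U \<in> sets dual_borel" "U \<inter> {\<gamma> \<in> dual_group. dual_neg \<gamma> \<in> U} = {}" "measure \<mu> U = 1"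
    and E: "E \<in> sets dual_borel"
  shows "measure \<mu> E \<le> measure \<nu> E"
proof -
  interpret \<mu>: prob_space \<mu>
    using dual_prob_measureD(1)[OF \<mu>] .
  interpret \<nu>: prob_space \<nu>
    using dual_prob_measureD(1)[OF \<nu>] .
  have sets: "sets \<mu> = sets dual_borel" "sets \<nu> = sets dual_borel" and space: "space \<mu> = dual_group"
    using dual_prob_measureD[OF \<mu>] dual_prob_measureD[OF \<nu>] by auto
  have compl_U: "dual_group - U \<in> sets \<mu>"
    using U(1) sets space by (metis sets.compl_sets)
  have null: "measure \<mu> (dual_group - U) = 0"
    using \<mu>.prob_compl[of U] U(1,3) sets space by simp
  have EU: "E \<inter> U \<in> sets \<mu>"
    using E U(1) sets by auto
  have "measure \<mu> E \<le> measure \<mu> ((E \<inter> U) \<union> (dual_group - U))"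
    using E sets.sets_into_space[of E \<mu>] EU compl_U sets space by (intro \<mu>.finite_measure_mono) auto
  also have "\<dots> \<le> measure \<mu> (E \<inter> U) + measure \<mu> (dual_group - U)"
    using EU compl_U by (rule measure_Un_le)
  also have "\<dots> \<le> measure \<nu> (E \<inter> U)"
    using measure_le_within_concentration_set[OF \<mu> \<nu> Im U(1,2) null, of "E \<inter> U"] E U(1) null by auto
  also have "\<dots> \<le> measure \<nu> E"
    using E EU sets by (intro \<nu>.finite_measure_mono) auto
  finally show ?thesis .
qed

theorem corollary1:
  fixes \<mu> :: "('a::{topological_ab_group_add,t2_space} \<Rightarrow> complex) measure"
    and U :: "('a \<Rightarrow> complex) set"
  assumes "lca_group TYPE('a)"
    and "dual_prob_measure \<mu>"
    and "U \<in> sets dual_borel"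
    and "U \<inter> {\<gamma> \<in> dual_group. dual_neg \<gamma> \<in> U} = {}"
    and "emeasure \<mu> U = 1"
  shows "\<forall>g. characteristic_function g \<and> (\<forall>x. Im (g x) = Im (fourier_stieltjes \<mu> x))
             \<longrightarrow> g = fourier_stieltjes \<mu>"
proof (intro allI impI, elim conjE)
  fix g :: "'a \<Rightarrow> complex"
  assume "characteristic_function g" and Im_g: "\<forall>x. Im (g x) = Im (fourier_stieltjes \<mu> x)"
  then obtain \<nu> where \<nu>: "dual_prob_measure \<nu>" "g = fourier_stieltjes \<nu>"
    unfolding characteristic_function_def by blast
  have Im: "\<And>x. Im (fourier_stieltjes \<mu> x) = Im (fourier_stieltjes \<nu> x)"
    using Im_g \<nu>(2) by simp
  have "measure \<mu> U = 1"
    using assms(5) by (simp add: measure_def)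
  then have "\<mu> = \<nu>"
    using dual_prob_measureD[OF assms(2)] dual_prob_measureD[OF \<nu>(1)]
      dual_prob_measure_le_if_concentrated[OF assms(2) \<nu>(1) Im assms(3,4)]
    by (intro prob_space_eqI_measure_le) auto
  then show "g = fourier_stieltjes \<mu>"
    using \<nu>(2) by simp
qed

end
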